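(* For every $k\ge 1$, the bi-hypergraph obtained from $\mathcal H_{2k+1}$ by adding two new vertices $u$ and $v$, removing the edge $\{v_{1,1},v_{1,2},v_{1,3}\}$, and adding the edges $\{u,v_{1,1},v_{1,2}\}$, $\{v,v_{1,2},v_{1,3}\}$, and $\{u,v_{1,j},v_{2k+1,j}\}$ and $\{v,v_{1,j+1},v_{2k+1,j+1}\}$ for all $j\in[2]$, is minimal uncolorable.
   Context: A bi-hypergraph $\mathcal H=(V,E)$ consists of a finite vertex set $V$ and a set $E$ of subsets of $V$, called edges, with no edge contained in another. A mapping $f:V\to\mathbb N$ is a proper coloring of $\mathcal H$ if $1<|f(e)|<|e|$ for every $e\in E$, where $f(e)=\{f(x):x\in e\}$. $\mathcal H$ is colorable if it has a proper coloring, and uncolorable otherwise. A subhypergraph of $\mathcal H$ is a bi-hypergraph $(V',E')$ with $V'\subseteq V$, $E'\subseteq E$; $\mathcal H$ is minimal uncolorable if it is uncolorable but every proper subhypergraph of it is colorable. For $k\ge 2$, $\mathcal H_k$ is the $3$-uniform bi-hypergraph with vertex set $\{v_{i,j}: i\in[k], j\in[3]\}$ (all distinct), with the convention $v_{i,4}=v_{i,1}$, $v_{i,5}=v_{i,2}$, whose edges are the sets $\{v_{i,1},v_{i,2},v_{i,3}\}$ for all $i\in[k]$ and the sets $\{v_{q+1,j},v_{q,j},v_{q,j+t}\}$ for all $q\in[k-1]$, $j\in[3]$, $t\in\{1,2\}$. *)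

theory Defs
  imports Main
begin

type_synonym 'a hypergraph = "'a set \<times> 'a set set"

definition bihypergraph :: "'a hypergraph \<Rightarrow> bool" where
  "bihypergraph H \<longleftrightarrow> finite (fst H) \<and> (\<forall>e\<in>snd H. e \<subseteq> fst H)
     \<and> (\<forall>e\<in>snd H. \<forall>e'\<in>snd H. e \<subseteq> e' \<longrightarrow> e = e')"

definition proper_coloring :: "'a hypergraph \<Rightarrow> ('a \<Rightarrow> nat) \<Rightarrow> bool" where
  "proper_coloring H f \<longleftrightarrow> (\<forall>e\<in>snd H. 1 < card (f ` e) \<and> card (f ` e) < card e)"

definition colorable :: "'a hypergraph \<Rightarrow> bool" where
  "colorable H \<longleftrightarrow> (\<exists>f. proper_coloring H f)"

definition subhypergraph :: "'a hypergraph \<Rightarrow> 'a hypergraph \<Rightarrow> bool" where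
  "subhypergraph H' H \<longleftrightarrow> bihypergraph H' \<and> fst H' \<subseteq> fst H \<and> snd H' \<subseteq> snd H"

definition minimal_uncolorable :: "'a hypergraph \<Rightarrow> bool" where
  "minimal_uncolorable H \<longleftrightarrow> bihypergraph H \<and> \<not> colorable H \<and>
     (\<forall>H'. subhypergraph H' H \<and> H' \<noteq> H \<longrightarrow> colorable H')"

text \<open>Vertices: Vx i j stands for v_{i,j}; U and W stand for the new vertices u and v.\<close>

datatype vtx = Vx nat nat | U | W

text \<open>v_{i,j} with the cyclic convention v_{i,4} = v_{i,1}, v_{i,5} = v_{i,2} (for j \<ge> 1).\<close>
definition hv :: "nat \<Rightarrow> nat \<Rightarrow> vtx" where
  "hv i j = Vx i (((j - 1) mod 3) + 1)"

definition H :: "nat \<Rightarrow> vtx hypergraph" where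
  "H k = ({Vx i j | i j. i \<in> {1..k} \<and> j \<in> {1..3}},
          {{hv i 1, hv i 2, hv i 3} | i. i \<in> {1..k}} \<union>
          {{hv (q+1) j, hv q j, hv q (j+t)} | q j t. q \<in> {1..k-1} \<and> j \<in> {1..3} \<and> t \<in> {1,2}})"

definition G :: "nat \<Rightarrow> vtx hypergraph" where
  "G k = (let n = 2*k+1 in
     (fst (H n) \<union> {U, W},
      (snd (H n) - {{hv 1 1, hv 1 2, hv 1 3}}) \<union>
      {{U, hv 1 1, hv 1 2}, {W, hv 1 2, hv 1 3}} \<union>
      {{U, hv 1 j, hv n j} | j. j \<in> {1..2}} \<union>
      {{W, hv 1 (j+1), hv n (j+1)} | j. j \<in> {1..2}}))"

end

theory Submission
  imports Defs
begin

(* A 3-edge is properly colored iff it receives exactly two colors. Record the colors of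
   v_{i,1}, v_{i,2}, v_{i,3} as a layer. If layer q is colored (x,x,y) up to rotation, the six
   edges between layers q and q+1 force layer q+1 to be (y,y,x); so in a proper coloring layers
   q and q+2 agree for q >= 2, and layer 2k+1 repeats layer 3. The edges through u and v, which
   tie layer 1 to layer 2k+1, then cannot all be two-colored. Conversely each single edge can be
   dropped: color the layers by alternating a complementary pair of patterns and switch to
   another pair at the dropped edge; what remains is a finite check on the patterns. *)

definition proper_edge :: "('a \<Rightarrow> nat) \<Rightarrow> 'a set \<Rightarrow> bool" where
  "proper_edge f e \<longleftrightarrow> 1 < card (f ` e) \<and> card (f ` e) < card e"

lemma proper_coloring_iff: "proper_coloring \<H> f \<longleftrightarrow> (\<forall>e\<in>snd \<H>. proper_edge f e)"
  by (simp add: proper_coloring_def proper_edge_def)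

lemma minimal_uncolorableI:
  assumes "bihypergraph \<H>" and "\<not> colorable \<H>"
    and covered: "\<And>x. x \<in> fst \<H> \<Longrightarrow> \<exists>e\<in>snd \<H>. x \<in> e"
    and removable: "\<And>e. e \<in> snd \<H> \<Longrightarrow> \<exists>f. \<forall>e'\<in>snd \<H> - {e}. proper_edge f e'"
  shows "minimal_uncolorable \<H>"
  unfolding minimal_uncolorable_def
proof (intro conjI assms allI impI)
  fix \<H>' assume sub: "subhypergraph \<H>' \<H> \<and> \<H>' \<noteq> \<H>"
  have "\<exists>e\<in>snd \<H>. e \<notin> snd \<H>'"
  proof (rule ccontr)
    assume "\<not> ?thesis"
    with sub have edges: "snd \<H>' = snd \<H>" by (auto simp: subhypergraph_def)
    with sub covered have "fst \<H> \<subseteq> fst \<H>'" by (fastforce simp: subhypergraph_def bihypergraph_def)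
    with sub edges have "\<H>' = \<H>" by (auto simp: subhypergraph_def prod_eq_iff)
    with sub show False by simp
  qed
  then obtain e f where "e \<in> snd \<H>" "e \<notin> snd \<H>'" "\<forall>e'\<in>snd \<H> - {e}. proper_edge f e'"
    using removable by blast
  with sub have "proper_coloring \<H>' f"
    by (auto simp: proper_coloring_iff subhypergraph_def)
  then show "colorable \<H>'" by (auto simp: colorable_def)
qed

definition two_valued :: "nat \<Rightarrow> nat \<Rightarrow> nat \<Rightarrow> bool" where
  "two_valued a b c \<longleftrightarrow> card {a, b, c} = 2"

lemma two_valued_iff: "two_valued a b c \<longleftrightarrow> \<not> (a = b \<and> b = c) \<and> (a = b \<or> b = c \<or> a = c)"
  by (auto simp: two_valued_def card_insert_if)

lemma proper_edge_triple:
  assumes "x \<noteq> y" "y \<noteq> z" "x \<noteq> z"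
  shows "proper_edge f {x, y, z} \<longleftrightarrow> two_valued (f x) (f y) (f z)"
  using assms by (auto simp: proper_edge_def two_valued_def card_insert_if)

section \<open>The edges of G\<close>

definition cyc :: "nat \<Rightarrow> nat \<Rightarrow> nat" where
  "cyc j t = (j + t - 1) mod 3 + 1"

lemma cyc_range:
  assumes "j \<in> {1,2,3}" "t \<in> {1,2}"
  shows "cyc j t \<in> {1,2,3} \<and> cyc j t \<noteq> j"
proof -
  have "j = 1 \<or> j = 2 \<or> j = 3" "t = 1 \<or> t = 2" using assms by auto
  then show ?thesis by (elim disjE) (simp_all add: cyc_def)
qed

definition row :: "nat \<Rightarrow> vtx set" where
  "row i = {Vx i 1, Vx i 2, Vx i 3}"

definition link :: "nat \<Rightarrow> nat \<Rightarrow> nat \<Rightarrow> vtx set" where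
  "link q j t = {Vx (Suc q) j, Vx q j, Vx q (cyc j t)}"

definition short_edge :: "vtx \<Rightarrow> nat \<Rightarrow> vtx set" where
  "short_edge x j = {x, Vx 1 j, Vx 1 (j + 1)}"

definition long_edge :: "vtx \<Rightarrow> nat \<Rightarrow> nat \<Rightarrow> vtx set" where
  "long_edge x n j = {x, Vx 1 j, Vx n j}"

lemma hv_simps: "hv i 1 = Vx i 1" "hv i 2 = Vx i 2" "hv i 3 = Vx i 3"
  by (simp_all add: hv_def)

lemma edges_H:
  "snd (H n) = row ` {1..n} \<union> {link q j t | q j t. q \<in> {1..n-1} \<and> j \<in> {1,2,3} \<and> t \<in> {1,2}}"
proof -
  have j3: "{1..3::nat} = {1,2,3}" by auto
  have "{hv (q+1) j, hv q j, hv q (j+t)} = link q j t" if "j \<in> {1,2,3}" for q j t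
    using that by (auto simp: hv_def link_def cyc_def)
  then have links:
    "{{hv (q+1) j, hv q j, hv q (j+t)} | q j t. q \<in> {1..n-1} \<and> j \<in> {1..3} \<and> t \<in> {1,2}}
      = {link q j t | q j t. q \<in> {1..n-1} \<and> j \<in> {1,2,3} \<and> t \<in> {1,2}}"
    unfolding j3 by blast
  have "{hv i 1, hv i 2, hv i 3} = row i" for i
    by (simp only: row_def hv_simps)
  then have rows: "{{hv i 1, hv i 2, hv i 3} | i. i \<in> {1..n}} = row ` {1..n}"
    by (simp only: Setcompr_eq_image)
  show ?thesis
    unfolding H_def snd_conv rows links ..
qed

lemma inj_row: "inj row"
proof (rule injI)
  fix i i' assume "row i = row i'"
  moreover have "Vx i 1 \<in> row i" by (simp add: row_def)
  ultimately have "Vx i 1 \<in> row i'" by simp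
  then show "i = i'" by (simp add: row_def)
qed

lemma row_1_ne_link:
  assumes "q \<ge> 1"
  shows "row 1 \<noteq> link q j t"
proof
  assume "row 1 = link q j t"
  moreover have "Vx (Suc q) j \<in> link q j t" by (simp add: link_def)
  ultimately have "Vx (Suc q) j \<in> row 1" by simp
  with assms show False by (simp add: row_def)
qed

lemma edges_G:
  "snd (G k) = row ` {2..2*k+1}
     \<union> {link q j t | q j t. q \<in> {1..2*k} \<and> j \<in> {1,2,3} \<and> t \<in> {1,2}}
     \<union> {short_edge U 1, short_edge W 2, long_edge U (2*k+1) 1, long_edge U (2*k+1) 2,
        long_edge W (2*k+1) 2, long_edge W (2*k+1) 3}"
proof -
  have "row ` {1..2*k+1} - {row 1} = row ` ({1..2*k+1} - {1})"
    using inj_row by (simp add: image_set_diff)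
  also have "{1..2*k+1} - {1} = {2..2*k+1}" by auto
  finally have rows: "row ` {1..2*k+1} - {row 1} = row ` {2..2*k+1}" .
  with row_1_ne_link have H_minus: "snd (H (2*k+1)) - {row 1} = row ` {2..2*k+1}
     \<union> {link q j t | q j t. q \<in> {1..2*k} \<and> j \<in> {1,2,3} \<and> t \<in> {1,2}}"
    unfolding edges_H Un_Diff by auto
  have arith: "{1..2::nat} = {1,2}" "(1::nat) + 1 = 2" "(2::nat) + 1 = 3" by auto
  \<comment> \<open>\<open>simp only\<close>: the full simp set rewrites \<open>1\<close> to \<open>Suc 0\<close> on one side only\<close>
  have extras:
    "{{U, hv 1 j, hv (2*k+1) j} | j. j \<in> {1..2}} = {long_edge U (2*k+1) 1, long_edge U (2*k+1) 2}"
    "{{W, hv 1 (j+1), hv (2*k+1) (j+1)} | j. j \<in> {1..2}} = {long_edge W (2*k+1) 2, long_edge W (2*k+1) 3}"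
    "{{U, hv 1 1, hv 1 2}, {W, hv 1 2, hv 1 3}} = {short_edge U 1, short_edge W 2}"
    by (simp_all only: arith Setcompr_eq_image image_insert image_empty hv_simps
        long_edge_def short_edge_def)
  have row1: "{hv 1 1, hv 1 2, hv 1 3} = row 1"
    by (simp only: row_def hv_simps)
  show ?thesis
    unfolding G_def Let_def snd_conv extras row1 H_minus by (simp add: Un_ac)
qed

lemma edge_G_cases:
  assumes "e \<in> snd (G k)"
  obtains (row) i where "i \<in> {2..2*k+1}" "e = row i"
  | (link) q j t where "q \<in> {1..2*k}" "j \<in> {1,2,3}" "t \<in> {1,2}" "e = link q j t"
  | (apex) "e \<in> {short_edge U 1, short_edge W 2, long_edge U (2*k+1) 1, long_edge U (2*k+1) 2,
        long_edge W (2*k+1) 2, long_edge W (2*k+1) 3}"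
  using assms unfolding edges_G by blast

lemma row_in_G: "i \<in> {2..2*k+1} \<Longrightarrow> row i \<in> snd (G k)"
  unfolding edges_G by blast

lemma link_in_G: "q \<in> {1..2*k} \<Longrightarrow> j \<in> {1,2,3} \<Longrightarrow> t \<in> {1,2} \<Longrightarrow> link q j t \<in> snd (G k)"
  unfolding edges_G by blast

lemma apex_edges_in_G:
  "{short_edge U 1, short_edge W 2, long_edge U (2*k+1) 1, long_edge U (2*k+1) 2,
    long_edge W (2*k+1) 2, long_edge W (2*k+1) 3} \<subseteq> snd (G k)"
  unfolding edges_G by blast

lemma vertices_G: "fst (G k) = {Vx i j | i j. i \<in> {1..2*k+1} \<and> j \<in> {1,2,3}} \<union> {U, W}"
  unfolding G_def H_def Let_def by auto

lemma edge_G_three_vertices: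
  assumes "k \<ge> 1" "e \<in> snd (G k)"
  shows "e \<subseteq> fst (G k) \<and> finite e \<and> card e = 3"
  using assms(2)
proof (cases rule: edge_G_cases)
  case (row i)
  then show ?thesis by (auto simp: row_def vertices_G)
next
  case (link q j t)
  then show ?thesis using cyc_range[OF link(2,3)] by (auto simp: link_def vertices_G)
next
  case apex
  with assms(1) show ?thesis by (auto simp: short_edge_def long_edge_def vertices_G)
qed

lemma bihypergraph_G:
  assumes "k \<ge> 1"
  shows "bihypergraph (G k)"
proof -
  have "{Vx i j | i j. i \<in> {1..2*k+1} \<and> j \<in> {1,2,3}} = (\<lambda>(i, j). Vx i j) ` ({1..2*k+1} \<times> {1,2,3})"
    by auto
  then have "finite (fst (G k))" unfolding vertices_G by simp
  moreover have "e = e'" if "e \<in> snd (G k)" "e' \<in> snd (G k)" "e \<subseteq> e'" for e e'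
    using that edge_G_three_vertices[OF assms] by (metis card_subset_eq)
  ultimately show ?thesis
    using edge_G_three_vertices[OF assms] by (auto simp: bihypergraph_def)
qed

lemma vertex_covered_G:
  assumes "k \<ge> 1" "x \<in> fst (G k)"
  shows "\<exists>e\<in>snd (G k). x \<in> e"
proof -
  from assms(2) consider (layer) i j where "i \<in> {1..2*k+1}" "j \<in> {1,2,3}" "x = Vx i j"
    | "x = U" | "x = W"
    unfolding vertices_G by blast
  then show ?thesis
  proof cases
    case layer
    show ?thesis
    proof (cases "i \<le> 2*k")
      case True
      with layer have "link i j 1 \<in> snd (G k)" by (intro link_in_G) auto
      moreover have "x \<in> link i j 1" using layer by (simp add: link_def)
      ultimately show ?thesis by blast
    next
      case False
      with layer assms(1) have "link (2*k) j 1 \<in> snd (G k)" by (intro link_in_G) auto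
      moreover have "x \<in> link (2*k) j 1" using False layer by (simp add: link_def)
      ultimately show ?thesis by blast
    qed
  qed (use apex_edges_in_G in \<open>auto simp: short_edge_def\<close>)
qed

section \<open>Colorings read layer by layer\<close>

type_synonym layer = "nat \<times> nat \<times> nat"

fun sel :: "nat \<Rightarrow> layer \<Rightarrow> nat" where
  "sel j (a, b, c) = (if j = 1 then a else if j = 2 then b else c)"

definition layer_of :: "(vtx \<Rightarrow> nat) \<Rightarrow> nat \<Rightarrow> layer" where
  "layer_of f i = (f (Vx i 1), f (Vx i 2), f (Vx i 3))"

lemma sel_layer_of: "j \<in> {1,2,3} \<Longrightarrow> sel j (layer_of f i) = f (Vx i j)"
  by (auto simp: layer_of_def)

definition row_ok :: "layer \<Rightarrow> bool" where
  "row_ok a \<longleftrightarrow> two_valued (sel 1 a) (sel 2 a) (sel 3 a)"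

definition link_ok :: "layer \<Rightarrow> layer \<Rightarrow> nat \<Rightarrow> nat \<Rightarrow> bool" where
  "link_ok a b j t \<longleftrightarrow> two_valued (sel j b) (sel j a) (sel (cyc j t) a)"

definition links_ok :: "layer \<Rightarrow> layer \<Rightarrow> bool" where
  "links_ok a b \<longleftrightarrow> (\<forall>j\<in>{1,2,3}. \<forall>t\<in>{1,2}. link_ok a b j t)"

definition short_ok :: "layer \<Rightarrow> nat \<Rightarrow> nat \<Rightarrow> bool" where
  "short_ok a p j \<longleftrightarrow> two_valued p (sel j a) (sel (j + 1) a)"

definition long_ok :: "layer \<Rightarrow> layer \<Rightarrow> nat \<Rightarrow> nat \<Rightarrow> bool" where
  "long_ok a c p j \<longleftrightarrow> two_valued p (sel j a) (sel j c)"

definition apexes_ok :: "layer \<Rightarrow> layer \<Rightarrow> nat \<Rightarrow> nat \<Rightarrow> bool" where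
  "apexes_ok a c u w \<longleftrightarrow> short_ok a u 1 \<and> short_ok a w 2
     \<and> long_ok a c u 1 \<and> long_ok a c u 2 \<and> long_ok a c w 2 \<and> long_ok a c w 3"

lemma links_okD: "links_ok a b \<Longrightarrow> j \<in> {1,2,3} \<Longrightarrow> t \<in> {1,2} \<Longrightarrow> link_ok a b j t"
  unfolding links_ok_def by blast

lemma proper_row: "proper_edge f (row i) \<longleftrightarrow> row_ok (layer_of f i)"
  by (simp add: row_def row_ok_def layer_of_def proper_edge_triple)

lemma proper_link:
  assumes "j \<in> {1,2,3}" "t \<in> {1,2}"
  shows "proper_edge f (link q j t) \<longleftrightarrow> link_ok (layer_of f q) (layer_of f (Suc q)) j t"
  using assms cyc_range[OF assms]
  by (simp add: link_def link_ok_def proper_edge_triple sel_layer_of)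

lemma proper_short:
  assumes "x \<in> {U, W}" "j \<in> {1,2}"
  shows "proper_edge f (short_edge x j) \<longleftrightarrow> short_ok (layer_of f 1) (f x) j"
  using assms by (auto simp: short_edge_def short_ok_def proper_edge_triple sel_layer_of)

lemma proper_long:
  assumes "x \<in> {U, W}" "j \<in> {1,2,3}" "n \<noteq> 1"
  shows "proper_edge f (long_edge x n j) \<longleftrightarrow> long_ok (layer_of f 1) (layer_of f n) (f x) j"
  using assms by (auto simp: long_edge_def long_ok_def proper_edge_triple sel_layer_of)

section \<open>Uncolorability\<close>

lemma layer_two_periodic:
  assumes "row_ok a" "row_ok b" "row_ok c" "links_ok a b" "links_ok b c"
  shows "c = a"
proof -
  obtain a1 a2 a3 b1 b2 b3 c1 c2 c3 where "a = (a1, a2, a3)" "b = (b1, b2, b3)" "c = (c1, c2, c3)"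
    by (metis prod_cases3)
  with assms show ?thesis
    by (simp add: row_ok_def links_ok_def link_ok_def cyc_def two_valued_iff) smt
qed

lemma no_closing_layers:
  assumes "row_ok b" "row_ok c" "links_ok a b" "links_ok b c" "apexes_ok a c u w"
  shows False
proof -
  obtain a1 a2 a3 b1 b2 b3 c1 c2 c3 where "a = (a1, a2, a3)" "b = (b1, b2, b3)" "c = (c1, c2, c3)"
    by (metis prod_cases3)
  with assms show ?thesis
    by (simp add: row_ok_def links_ok_def link_ok_def cyc_def two_valued_iff
        apexes_ok_def short_ok_def long_ok_def) smt
qed

lemma proper_coloring_G_D:
  assumes "k \<ge> 1" and "proper_coloring (G k) f"
  shows "\<forall>i\<in>{2..2*k+1}. row_ok (layer_of f i)"
    and "\<forall>q\<in>{1..2*k}. links_ok (layer_of f q) (layer_of f (Suc q))"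
    and "apexes_ok (layer_of f 1) (layer_of f (2*k+1)) (f U) (f W)"
proof -
  have proper: "proper_edge f e" if "e \<in> snd (G k)" for e
    using assms(2) that by (simp add: proper_coloring_iff)
  show "\<forall>i\<in>{2..2*k+1}. row_ok (layer_of f i)"
    using proper[OF row_in_G] by (simp add: proper_row)
  show "\<forall>q\<in>{1..2*k}. links_ok (layer_of f q) (layer_of f (Suc q))"
    unfolding links_ok_def using proper[OF link_in_G] proper_link by blast
  have "2*k+1 \<noteq> 1" using assms(1) by simp
  moreover have "\<forall>e\<in>{short_edge U 1, short_edge W 2, long_edge U (2*k+1) 1, long_edge U (2*k+1) 2,
      long_edge W (2*k+1) 2, long_edge W (2*k+1) 3}. proper_edge f e"
    using proper apex_edges_in_G by blast
  ultimately show "apexes_ok (layer_of f 1) (layer_of f (2*k+1)) (f U) (f W)"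
    by (simp add: apexes_ok_def proper_short proper_long)
qed

lemma G_uncolorable:
  assumes "k \<ge> 1"
  shows "\<not> colorable (G k)"
proof
  assume "colorable (G k)"
  then obtain f where "proper_coloring (G k) f" by (auto simp: colorable_def)
  note conds = proper_coloring_G_D[OF assms this]
  let ?L = "layer_of f"
  have period: "?L (q + 2) = ?L q" if "2 \<le> q" "q + 2 \<le> 2*k+1" for q
    using that conds(1,2) by (intro layer_two_periodic) auto
  have odd_layers: "?L (2*i+1) = ?L 3" if "1 \<le> i" "i \<le> k" for i
    using that
  proof (induction i rule: dec_induct)
    case (step n)
    then show ?case using period[of "2*n+1"] by simp
  qed simp
  show False
  proof (rule no_closing_layers)
    show "row_ok (?L 2)" "row_ok (?L 3)" "links_ok (?L 1) (?L 2)" "links_ok (?L 2) (?L 3)"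
      using assms conds(1,2) by (auto simp: numeral_2_eq_2 numeral_3_eq_3)
    show "apexes_ok (?L 1) (?L 3) (f U) (f W)"
      using conds(3) odd_layers[OF assms order_refl] by simp
  qed
qed

section \<open>Removing one edge\<close>

lemma proper_except:
  assumes "k \<ge> 1"
    and rows: "\<And>i. i \<in> {2..2*k+1} \<Longrightarrow> row i \<noteq> e\<^sub>0 \<Longrightarrow> row_ok (layer_of f i)"
    and links: "\<And>q j t. q \<in> {1..2*k} \<Longrightarrow> j \<in> {1,2,3} \<Longrightarrow> t \<in> {1,2} \<Longrightarrow> link q j t \<noteq> e\<^sub>0 \<Longrightarrow>
      link_ok (layer_of f q) (layer_of f (Suc q)) j t"
    and "short_edge U 1 \<noteq> e\<^sub>0 \<Longrightarrow> short_ok (layer_of f 1) (f U) 1"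
    and "short_edge W 2 \<noteq> e\<^sub>0 \<Longrightarrow> short_ok (layer_of f 1) (f W) 2"
    and "long_edge U (2*k+1) 1 \<noteq> e\<^sub>0 \<Longrightarrow> long_ok (layer_of f 1) (layer_of f (2*k+1)) (f U) 1"
    and "long_edge U (2*k+1) 2 \<noteq> e\<^sub>0 \<Longrightarrow> long_ok (layer_of f 1) (layer_of f (2*k+1)) (f U) 2"
    and "long_edge W (2*k+1) 2 \<noteq> e\<^sub>0 \<Longrightarrow> long_ok (layer_of f 1) (layer_of f (2*k+1)) (f W) 2"
    and "long_edge W (2*k+1) 3 \<noteq> e\<^sub>0 \<Longrightarrow> long_ok (layer_of f 1) (layer_of f (2*k+1)) (f W) 3"
  shows "\<forall>e\<in>snd (G k) - {e\<^sub>0}. proper_edge f e"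
proof
  fix e assume "e \<in> snd (G k) - {e\<^sub>0}"
  then have e: "e \<in> snd (G k)" and ne: "e \<noteq> e\<^sub>0" by auto
  from e show "proper_edge f e"
  proof (cases rule: edge_G_cases)
    case row
    then show ?thesis using rows ne by (simp add: proper_row)
  next
    case link
    then show ?thesis using links ne by (simp add: proper_link)
  next
    case apex
    then consider "e = short_edge U 1" | "e = short_edge W 2" | "e = long_edge U (2*k+1) 1"
      | "e = long_edge U (2*k+1) 2" | "e = long_edge W (2*k+1) 2" | "e = long_edge W (2*k+1) 3"
      by blast
    moreover have "2*k+1 \<noteq> 1" using assms(1) by simp
    ultimately show ?thesis
      using assms(4-9) ne by cases (simp_all add: proper_short proper_long)
  qed
qed

fun layer_coloring :: "(nat \<Rightarrow> layer) \<Rightarrow> nat \<Rightarrow> nat \<Rightarrow> vtx \<Rightarrow> nat" where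
  "layer_coloring L u w (Vx i j) = sel j (L i)"
| "layer_coloring L u w U = u"
| "layer_coloring L u w W = w"

lemma layer_of_layer_coloring [simp]: "layer_of (layer_coloring L u w) i = L i"
  by (cases "L i") (simp add: layer_of_def)

definition alt :: "layer \<Rightarrow> layer \<Rightarrow> nat \<Rightarrow> layer" where
  "alt A B q = (if odd q then A else B)"

definition alternating_ok :: "layer \<Rightarrow> layer \<Rightarrow> bool" where
  "alternating_ok A B \<longleftrightarrow> row_ok A \<and> row_ok B \<and> links_ok A B \<and> links_ok B A"

lemma alternating_okD:
  "alternating_ok A B \<Longrightarrow> row_ok (alt A B q) \<and> links_ok (alt A B q) (alt A B (Suc q))"
  by (simp add: alternating_ok_def alt_def)

definition switch_layers :: "layer \<Rightarrow> layer \<Rightarrow> layer \<Rightarrow> layer \<Rightarrow> layer \<Rightarrow> nat \<Rightarrow> nat \<Rightarrow> layer" where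
  "switch_layers A B M C D m q = (if q < m then alt A B q else if q = m then M else alt C D q)"

lemma switch_layers_ok:
  assumes "alternating_ok A B" "alternating_ok C D" "2 \<le> m \<Longrightarrow> links_ok (alt A B (m - 1)) M"
  shows "q \<noteq> m \<Longrightarrow> row_ok (switch_layers A B M C D m q)"
    and "q \<noteq> m \<Longrightarrow> 1 \<le> q \<Longrightarrow> links_ok (switch_layers A B M C D m q) (switch_layers A B M C D m (Suc q))"
proof -
  show "q \<noteq> m \<Longrightarrow> row_ok (switch_layers A B M C D m q)"
    using assms(1,2)[THEN alternating_okD] by (simp add: switch_layers_def)
  assume "q \<noteq> m" "1 \<le> q"
  then consider "Suc q < m" | "Suc q = m" | "m < q" by linarith
  then show "links_ok (switch_layers A B M C D m q) (switch_layers A B M C D m (Suc q))"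
  proof cases
    case 1
    then show ?thesis using alternating_okD[OF assms(1)] by (simp add: switch_layers_def)
  next
    case 2
    then have "m = Suc q" by simp
    then show ?thesis using assms(3) \<open>1 \<le> q\<close> by (simp add: switch_layers_def)
  next
    case 3
    then show ?thesis using alternating_okD[OF assms(2)] by (simp add: switch_layers_def)
  qed
qed

lemma row_removable_by:
  assumes "k \<ge> 1" "m \<in> {2..2*k+1}" "alternating_ok A B" "alternating_ok C D"
    and pre: "links_ok (alt A B (m - 1)) M" and post: "links_ok M (alt C D (Suc m))"
    and "apexes_ok A C u w" "m = 2*k+1 \<Longrightarrow> apexes_ok A M u w"
  shows "\<exists>f. \<forall>e\<in>snd (G k) - {row m}. proper_edge f e"
proof -
  define L where "L = switch_layers A B M C D m"
  have "L 1 = A" using assms(2) by (simp add: L_def switch_layers_def alt_def)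
  moreover have "L (2*k+1) = (if m = 2*k+1 then M else C)"
    using assms(2) by (simp add: L_def switch_layers_def alt_def)
  ultimately have apexes: "apexes_ok (L 1) (L (2*k+1)) u w"
    using assms(7,8) by simp
  have "\<forall>e\<in>snd (G k) - {row m}. proper_edge (layer_coloring L u w) e"
  proof (rule proper_except[OF assms(1)])
    fix i assume "row i \<noteq> row m"
    then have "i \<noteq> m" by auto
    then show "row_ok (layer_of (layer_coloring L u w) i)"
      using switch_layers_ok(1)[OF assms(3,4) pre] by (simp add: L_def)
  next
    fix q j t :: nat assume "q \<in> {1..2*k}" "j \<in> {1,2,3}" "t \<in> {1,2}"
    then show "link_ok (layer_of (layer_coloring L u w) q) (layer_of (layer_coloring L u w) (Suc q)) j t"
      using switch_layers_ok(2)[OF assms(3,4) pre, of q] post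
      by (cases "q = m") (auto simp: L_def switch_layers_def links_ok_def)
  qed (use apexes in \<open>simp_all add: apexes_ok_def\<close>)
  then show ?thesis by blast
qed

(* Layers up to m alternate A, B and later ones C, D; the links between layers m and m + 1
   join A to D or B to C, depending on the parity of m. *)

lemma link_removable_by:
  assumes "k \<ge> 1" "m \<in> {1..2*k}" "alternating_ok A B" "alternating_ok C D"
    and switch: "\<forall>j\<in>{1,2,3}. \<forall>t\<in>{1,2}. (j, t) \<noteq> (j\<^sub>0, t\<^sub>0) \<longrightarrow> link_ok A D j t \<and> link_ok B C j t"
    and "apexes_ok A C u w"
  shows "\<exists>f. \<forall>e\<in>snd (G k) - {link m j\<^sub>0 t\<^sub>0}. proper_edge f e"
proof -
  define L where "L = switch_layers A B (alt A B m) C D m"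
  have pre: "links_ok (alt A B (m - 1)) (alt A B m)" if "2 \<le> m"
    using alternating_okD[OF assms(3), of "m - 1"] that by (simp add: Suc_diff_1)
  have L_m: "L m = alt A B m" "L (Suc m) = alt C D (Suc m)"
    by (simp_all add: L_def switch_layers_def)
  have L_ends: "L 1 = A" "L (2*k+1) = C"
    using assms(2) by (auto simp: L_def switch_layers_def alt_def)
  have "\<forall>e\<in>snd (G k) - {link m j\<^sub>0 t\<^sub>0}. proper_edge (layer_coloring L u w) e"
  proof (rule proper_except[OF assms(1)])
    fix i
    show "row_ok (layer_of (layer_coloring L u w) i)"
      using switch_layers_ok(1)[OF assms(3,4) pre, of i] alternating_okD[OF assms(3), of m]
      by (cases "i = m") (simp_all add: L_def L_m(1)[unfolded L_def])
  next
    fix q j t assume "q \<in> {1..2*k}" "j \<in> {1,2,3}" "t \<in> {1,2}" "link q j t \<noteq> link m j\<^sub>0 t\<^sub>0"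
    note jt = \<open>j \<in> {1,2,3}\<close> \<open>t \<in> {1,2}\<close>
    show "link_ok (layer_of (layer_coloring L u w) q) (layer_of (layer_coloring L u w) (Suc q)) j t"
    proof (cases "q = m")
      case True
      with \<open>link q j t \<noteq> link m j\<^sub>0 t\<^sub>0\<close> have "(j, t) \<noteq> (j\<^sub>0, t\<^sub>0)" by auto
      with switch jt have "link_ok A D j t \<and> link_ok B C j t" by blast
      with True L_m show ?thesis by (simp add: alt_def)
    next
      case False
      with \<open>q \<in> {1..2*k}\<close> show ?thesis
        using switch_layers_ok(2)[OF assms(3,4) pre, of q] links_okD[OF _ jt] by (simp add: L_def)
    qed
  qed (use assms(6) L_ends in \<open>simp_all add: apexes_ok_def\<close>)
  then show ?thesis by blast
qed

lemma apex_removable_by: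
  assumes "k \<ge> 1" "alternating_ok C D"
    and "short_edge U 1 \<noteq> e\<^sub>0 \<Longrightarrow> short_ok C u 1"
    and "short_edge W 2 \<noteq> e\<^sub>0 \<Longrightarrow> short_ok C w 2"
    and "long_edge U (2*k+1) 1 \<noteq> e\<^sub>0 \<Longrightarrow> long_ok C C u 1"
    and "long_edge U (2*k+1) 2 \<noteq> e\<^sub>0 \<Longrightarrow> long_ok C C u 2"
    and "long_edge W (2*k+1) 2 \<noteq> e\<^sub>0 \<Longrightarrow> long_ok C C w 2"
    and "long_edge W (2*k+1) 3 \<noteq> e\<^sub>0 \<Longrightarrow> long_ok C C w 3"
  shows "\<exists>f. \<forall>e\<in>snd (G k) - {e\<^sub>0}. proper_edge f e"
proof -
  have "\<forall>e\<in>snd (G k) - {e\<^sub>0}. proper_edge (layer_coloring (alt C D) u w) e"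
  proof (rule proper_except[OF assms(1)])
    fix i show "row_ok (layer_of (layer_coloring (alt C D) u w) i)"
      using alternating_okD[OF assms(2)] by simp
  next
    fix q j t :: nat assume "j \<in> {1,2,3}" "t \<in> {1,2}"
    then show "link_ok (layer_of (layer_coloring (alt C D) u w) q)
        (layer_of (layer_coloring (alt C D) u w) (Suc q)) j t"
      using alternating_okD[OF assms(2), of q] by (simp add: links_okD)
  qed (use assms(3-) in \<open>simp_all add: alt_def\<close>)
  then show ?thesis by blast
qed

lemmas layer_conditions = alternating_ok_def row_ok_def links_ok_def link_ok_def apexes_ok_def
  short_ok_def long_ok_def two_valued_iff cyc_def alt_def

(* The patterns below were found by an exhaustive search over three colors. *)

lemma row_removable:
  assumes "k \<ge> 1" "i \<in> {2..2*k+1}"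
  shows "\<exists>f. \<forall>e\<in>snd (G k) - {row i}. proper_edge f e"
proof (cases "even i")
  case True
  then show ?thesis using assms
    by (intro row_removable_by[where A = "(0,0,1)" and B = "(1,1,0)" and M = "(1,1,1)"
          and C = "(0,0,2)" and D = "(2,2,0)" and u = 1 and w = 1])
      (auto simp: layer_conditions)
next
  case False
  then show ?thesis using assms
    by (intro row_removable_by[where A = "(0,0,1)" and B = "(1,1,0)" and M = "(0,0,0)"
          and C = "(1,1,2)" and D = "(2,2,1)" and u = 1 and w = 1])
      (auto simp: layer_conditions)
qed

lemma link_removable:
  assumes "k \<ge> 1" "q \<in> {1..2*k}" "j \<in> {1,2,3}" "t \<in> {1,2}"
  shows "\<exists>f. \<forall>e\<in>snd (G k) - {link q j t}. proper_edge f e"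
proof -
  have "j = 1 \<or> j = 2 \<or> j = 3" "t = 1 \<or> t = 2" using assms(3,4) by auto
  then consider "j = 1" "t = 1" | "j = 1" "t = 2" | "j = 2" "t = 1" | "j = 2" "t = 2"
    | "j = 3" "t = 1" | "j = 3" "t = 2" by blast
  then show ?thesis
  proof cases
    case 1
    then show ?thesis using assms(1,2)
      by (intro link_removable_by[where A = "(0,0,1)" and B = "(1,1,0)"
          and C = "(1,0,0)" and D = "(0,1,1)" and u = 1 and w = 1]) (simp_all add: layer_conditions)
  next
    case 2
    then show ?thesis using assms(1,2)
      by (intro link_removable_by[where A = "(0,1,0)" and B = "(1,0,1)"
          and C = "(1,0,0)" and D = "(0,1,1)" and u = 0 and w = 1]) (simp_all add: layer_conditions)
  next
    case 3
    then show ?thesis using assms(1,2)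
      by (intro link_removable_by[where A = "(0,1,1)" and B = "(1,0,0)"
          and C = "(0,0,1)" and D = "(1,1,0)" and u = 1 and w = 0]) (simp_all add: layer_conditions)
  next
    case 4
    then show ?thesis using assms(1,2)
      by (intro link_removable_by[where A = "(0,0,1)" and B = "(1,1,0)"
          and C = "(0,1,0)" and D = "(1,0,1)" and u = 1 and w = 0]) (simp_all add: layer_conditions)
  next
    case 5
    then show ?thesis using assms(1,2)
      by (intro link_removable_by[where A = "(0,1,0)" and B = "(1,0,1)"
          and C = "(0,0,1)" and D = "(1,1,0)" and u = 1 and w = 0]) (simp_all add: layer_conditions)
  next
    case 6
    then show ?thesis using assms(1,2)
      by (intro link_removable_by[where A = "(0,1,1)" and B = "(1,0,0)"
          and C = "(1,1,0)" and D = "(0,0,1)" and u = 0 and w = 0]) (simp_all add: layer_conditions)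
  qed
qed

lemma apex_removable:
  assumes "k \<ge> 1" and "e \<in> {short_edge U 1, short_edge W 2, long_edge U (2*k+1) 1,
    long_edge U (2*k+1) 2, long_edge W (2*k+1) 2, long_edge W (2*k+1) 3}"
  shows "\<exists>f. \<forall>e'\<in>snd (G k) - {e}. proper_edge f e'"
proof -
  from assms(2) consider "e = short_edge U 1" | "e = short_edge W 2" | "e = long_edge U (2*k+1) 1"
    | "e = long_edge U (2*k+1) 2" | "e = long_edge W (2*k+1) 2" | "e = long_edge W (2*k+1) 3"
    by blast
  then show ?thesis
  proof cases
    case 1
    then show ?thesis
      by (intro apex_removable_by[OF assms(1), where C = "(0,1,1)" and D = "(1,0,0)" and u = 2 and w = 0])
        (simp_all add: layer_conditions)
  next
    case 2
    then show ?thesis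
      by (intro apex_removable_by[OF assms(1), where C = "(0,0,1)" and D = "(1,1,0)" and u = 1 and w = 2])
        (simp_all add: layer_conditions)
  next
    case 3
    then show ?thesis
      by (intro apex_removable_by[OF assms(1), where C = "(0,1,1)" and D = "(1,0,0)" and u = 0 and w = 0])
        (simp_all add: layer_conditions)
  next
    case 4
    then show ?thesis
      by (intro apex_removable_by[OF assms(1), where C = "(0,1,1)" and D = "(1,0,0)" and u = 1 and w = 0])
        (simp_all add: layer_conditions)
  next
    case 5
    then show ?thesis
      by (intro apex_removable_by[OF assms(1), where C = "(0,0,1)" and D = "(1,1,0)" and u = 1 and w = 0])
        (simp_all add: layer_conditions)
  next
    case 6
    then show ?thesis
      by (intro apex_removable_by[OF assms(1), where C = "(0,0,1)" and D = "(1,1,0)" and u = 1 and w = 1])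
        (simp_all add: layer_conditions)
  qed
qed

theorem mainTheorem20:
  fixes k :: nat
  assumes "k \<ge> 1"
  shows "minimal_uncolorable (G k)"
proof (rule minimal_uncolorableI)
  show "bihypergraph (G k)" using bihypergraph_G[OF assms] .
  show "\<not> colorable (G k)" using G_uncolorable[OF assms] .
  show "\<exists>e\<in>snd (G k). x \<in> e" if "x \<in> fst (G k)" for x
    using vertex_covered_G[OF assms that] .
  show "\<exists>f. \<forall>e'\<in>snd (G k) - {e}. proper_edge f e'" if "e \<in> snd (G k)" for e
    using that
  proof (cases rule: edge_G_cases)
    case row
    then show ?thesis using row_removable[OF assms] by simp
  next
    case link
    then show ?thesis using link_removable[OF assms] by simp
  next
    case apex
    then show ?thesis using apex_removable[OF assms] by simp
  qed
qed

end
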